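(* Consider the graph whose vertices are the admissible Hilbert polynomials and whose edges are the pairs $(P,\sigma(P))$ and $(P,\lambda(P))$ for all admissible Hilbert polynomials $P$. This graph is an infinite binary tree (each vertex $P$ having the two children $\sigma(P)$ and $\lambda(P)$), whose root is the constant polynomial $1$.
   Context: Binomial coefficients are polynomials in $t$: $\binom{t+a}{b}=\frac{(t+a)\cdots(t+a-b+1)}{b!}$ for $b\ge0$ and $0$ for $b<0$. A polynomial $P\in\mathbb{Q}[t]$ is an admissible Hilbert polynomial if it is the Hilbert polynomial of a nonempty closed subscheme of some projective space over an algebraically closed field; equivalently it has a (unique) Gotzmann expression $P(t)=\sum_{j=1}^r\binom{t+b_j-(j-1)}{b_j}$ with integers $b_1\ge\dots\ge b_r\ge0$, and equivalently a (unique) Macaulay–Hartshorne expression $P(t)=\sum_{i=0}^d\binom{t+i}{i+1}-\binom{t+i-e_i}{i+1}$ with integers $e_0\ge e_1\ge\dots\ge e_d>0$. Define $\sigma(P):=1+P$ (Gotzmann partition $(b_1,\dots,b_r,0)$, Macaulay–Hartshorne partition $(e_0+1,e_1,\dots,e_d)$) and $\lambda(P)$ the admissible polynomial with Gotzmann expression $\sum_{j=1}^r\binom{t+b_j+1-(j-1)}{b_j+1}$ (Macaulay–Hartshorne partition $(e_0,e_0,e_1,\dots,e_d)$). *)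

theory Defs
  imports "HOL-Computational_Algebra.Polynomial"
begin

text \<open>The binomial coefficient (t+a choose b) as a polynomial in t over the rationals;
  zero for negative b.\<close>
definition binpoly :: "int \<Rightarrow> int \<Rightarrow> rat poly" where
  "binpoly a b = (if b < 0 then 0 else
     smult (1 / fact (nat b)) (\<Prod>i<nat b. [:of_int a - of_int (int i), 1:]))"

definition gotz_partition :: "nat list \<Rightarrow> bool" where
  "gotz_partition bs \<longleftrightarrow> bs \<noteq> [] \<and> sorted_wrt (\<ge>) bs"

text \<open>Gotzmann expression: sum over j=1..r of (t + b_j - (j-1) choose b_j);
  list index i corresponds to j = i+1.\<close>
definition gotz_poly :: "nat list \<Rightarrow> rat poly" where
  "gotz_poly bs = (\<Sum>i<length bs. binpoly (int (bs ! i) - int i) (int (bs ! i)))"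

definition admissible :: "rat poly \<Rightarrow> bool" where
  "admissible P \<longleftrightarrow> (\<exists>bs. gotz_partition bs \<and> P = gotz_poly bs)"

definition gotzmann_of :: "rat poly \<Rightarrow> nat list" where
  "gotzmann_of P = (THE bs. gotz_partition bs \<and> P = gotz_poly bs)"

definition sigma_op :: "rat poly \<Rightarrow> rat poly" where
  "sigma_op P = 1 + P"

definition lambda_op :: "rat poly \<Rightarrow> rat poly" where
  "lambda_op P = gotz_poly (map Suc (gotzmann_of P))"

definition child :: "rat poly \<Rightarrow> rat poly \<Rightarrow> bool" where
  "child P Q \<longleftrightarrow> admissible P \<and> (Q = sigma_op P \<or> Q = lambda_op P)"

end

theory Submission
  imports Defs
begin

(* Admissible polynomials are the Gotzmann expressions of Gotzmann partitions, and the expression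
   is injective on partitions. On partitions, sigma appends an entry 0 and lambda adds 1 to every
   entry. A partition other than (0) therefore arises in exactly one way from a smaller partition,
   depending on whether its last entry is 0 or positive: every admissible polynomial except 1 has
   exactly one parent, and climbing to parents ends at (0), that is, at 1. *)

lemma degree_binpoly: "degree (binpoly a (int b)) = b"
  unfolding binpoly_def by (simp add: degree_prod_eq_sum_degree)

lemma lead_coeff_binpoly: "lead_coeff (binpoly a (int b)) = 1 / fact b"
  unfolding binpoly_def by (simp add: lead_coeff_prod)

lemma coeff_binpoly_nonneg: "b \<le> d \<Longrightarrow> 0 \<le> coeff (binpoly a (int b)) d"
  by (cases "b = d") (simp_all add: lead_coeff_binpoly[of a, unfolded degree_binpoly]
      coeff_eq_0 degree_binpoly)

text \<open>Gotzmann expression with indices shifted by k, so that it recurses along the partition.\<close>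
fun gotz_poly_from :: "nat \<Rightarrow> nat list \<Rightarrow> rat poly" where
  "gotz_poly_from k [] = 0"
| "gotz_poly_from k (b # bs) = binpoly (int b - int k) (int b) + gotz_poly_from (Suc k) bs"

lemma gotz_poly_from_eq_sum:
  "gotz_poly_from k bs = (\<Sum>i<length bs. binpoly (int (bs ! i) - int i - int k) (int (bs ! i)))"
proof (induction bs arbitrary: k)
  case (Cons b bs)
  show ?case
    by (simp add: Cons.IH sum.lessThan_Suc_shift algebra_simps del: sum.lessThan_Suc)
qed simp

lemma gotz_poly_conv_from: "gotz_poly bs = gotz_poly_from 0 bs"
  unfolding gotz_poly_def gotz_poly_from_eq_sum by simp

lemma gotz_poly_from_snoc_0: "gotz_poly_from k (bs @ [0]) = gotz_poly_from k bs + 1"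
  by (induction bs arbitrary: k) (simp_all add: binpoly_def)

lemma degree_gotz_poly_from_le: "\<forall>x\<in>set bs. x \<le> d \<Longrightarrow> degree (gotz_poly_from k bs) \<le> d"
  by (induction bs arbitrary: k) (auto simp: degree_binpoly intro: degree_add_le)

lemma coeff_gotz_poly_from_nonneg: "\<forall>x\<in>set bs. x \<le> d \<Longrightarrow> 0 \<le> coeff (gotz_poly_from k bs) d"
  by (induction bs arbitrary: k) (auto simp: coeff_binpoly_nonneg)

lemma coeff_gotz_poly_from_Cons_pos:
  assumes "sorted_wrt (\<ge>) (b # bs)"
  shows "0 < coeff (gotz_poly_from k (b # bs)) b"
proof -
  have "0 \<le> coeff (gotz_poly_from (Suc k) bs) b"
    using assms by (intro coeff_gotz_poly_from_nonneg) simp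
  then show ?thesis
    using lead_coeff_binpoly[of "int b - int k" b] by (simp add: degree_binpoly add_pos_nonneg)
qed

lemma degree_gotz_poly_from_Cons:
  assumes "sorted_wrt (\<ge>) (b # bs)"
  shows "degree (gotz_poly_from k (b # bs)) = b"
proof (rule antisym)
  show "degree (gotz_poly_from k (b # bs)) \<le> b"
    using assms by (intro degree_gotz_poly_from_le) auto
  show "b \<le> degree (gotz_poly_from k (b # bs))"
    using coeff_gotz_poly_from_Cons_pos[of b bs k] assms by (intro le_degree) simp
qed

text \<open>The leading term of a Gotzmann expression is a positive multiple of \<open>t ^ b\<^sub>1\<close>, so the
  first entry of the partition can be recovered and peeled off.\<close>
lemma gotz_poly_from_inject:
  "sorted_wrt (\<ge>) bs \<Longrightarrow> sorted_wrt (\<ge>) cs \<Longrightarrow> gotz_poly_from k bs = gotz_poly_from k cs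
    \<Longrightarrow> bs = cs"
proof (induction bs arbitrary: cs k)
  case Nil
  show ?case
  proof (cases cs)
    case (Cons c cs')
    then show ?thesis
      using Nil.prems coeff_gotz_poly_from_Cons_pos[of c cs' k] by simp
  qed simp
next
  case (Cons b bs)
  show ?case
  proof (cases cs)
    case Nil
    then show ?thesis
      using Cons.prems coeff_gotz_poly_from_Cons_pos[of b bs k] by simp
  next
    case (Cons c cs')
    have "b = c"
      using Cons.prems degree_gotz_poly_from_Cons[of b bs k] degree_gotz_poly_from_Cons[of c cs' k]
      unfolding Cons by simp
    then have "gotz_poly_from (Suc k) bs = gotz_poly_from (Suc k) cs'"
      using Cons.prems(3) unfolding Cons by simp
    with Cons.IH[of cs' "Suc k"] Cons.prems \<open>b = c\<close> show ?thesis
      unfolding Cons by simp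
  qed
qed

lemma inj_on_gotz_poly: "inj_on gotz_poly {bs. gotz_partition bs}"
  by (rule inj_onI) (auto simp: gotz_partition_def gotz_poly_conv_from intro: gotz_poly_from_inject)

lemma gotzmann_of_gotz_poly: "gotz_partition bs \<Longrightarrow> gotzmann_of (gotz_poly bs) = bs"
  unfolding gotzmann_of_def
  by (rule the_equality) (auto dest: inj_onD[OF inj_on_gotz_poly])

lemma gotz_poly_snoc_0: "gotz_poly (bs @ [0]) = 1 + gotz_poly bs"
  by (simp add: gotz_poly_conv_from gotz_poly_from_snoc_0)

lemma gotz_poly_single_0: "gotz_poly [0] = 1"
  using gotz_poly_snoc_0[of "[]"] by (simp add: gotz_poly_def)

lemma sigma_op_gotz_poly: "sigma_op (gotz_poly bs) = gotz_poly (bs @ [0])"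
  by (simp add: sigma_op_def gotz_poly_snoc_0)

lemma lambda_op_gotz_poly: "gotz_partition bs \<Longrightarrow> lambda_op (gotz_poly bs) = gotz_poly (map Suc bs)"
  by (simp add: lambda_op_def gotzmann_of_gotz_poly)

text \<open>\<^const>\<open>sigma_op\<close> and \<^const>\<open>lambda_op\<close> read on Gotzmann partitions.\<close>
definition partition_step :: "nat list \<Rightarrow> nat list \<Rightarrow> bool" where
  "partition_step bs cs \<longleftrightarrow> cs = bs @ [0] \<or> cs = map Suc bs"

lemma gotz_partition_single_0: "gotz_partition [0]"
  by (simp add: gotz_partition_def)

lemma gotz_partition_step: "gotz_partition bs \<Longrightarrow> partition_step bs cs \<Longrightarrow> gotz_partition cs"
  by (auto simp: gotz_partition_def partition_step_def sorted_wrt_append sorted_wrt_map)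

lemma snoc_0_neq_map_Suc: "bs @ [0] \<noteq> map Suc cs"
  by (metis Zero_not_Suc last_map last_snoc list.map_disc_iff snoc_eq_iff_butlast)

lemma partition_step_left_unique: "partition_step bs cs \<Longrightarrow> partition_step bs' cs \<Longrightarrow> bs = bs'"
  unfolding partition_step_def
  by (metis snoc_0_neq_map_Suc append1_eq_conv list.inj_map_strong nat.inject)

lemma not_partition_step_single_0: "gotz_partition bs \<Longrightarrow> \<not> partition_step bs [0]"
  by (auto simp: gotz_partition_def partition_step_def)

lemma gotz_partition_parent:
  assumes "gotz_partition cs" and "cs \<noteq> [0]"
  obtains bs where "gotz_partition bs" and "partition_step bs cs"
    and "sum_list bs + length bs < sum_list cs + length cs"
proof -
  obtain ys y where cs: "cs = ys @ [y]"
    using assms(1) by (metis gotz_partition_def rev_exhaust)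
  have sorted: "sorted_wrt (\<ge>) (ys @ [y])"
    using assms(1) unfolding gotz_partition_def cs by simp
  show thesis
  proof (cases "y = 0")
    case True
    then have "gotz_partition ys"
      using sorted assms(2) unfolding gotz_partition_def cs by (auto simp: sorted_wrt_append)
    moreover have "partition_step ys cs"
      using True cs by (simp add: partition_step_def)
    ultimately show thesis
      using that cs by simp
  next
    case False
    then have pos: "\<forall>x\<in>set cs. 0 < x"
      using sorted unfolding cs by (auto simp: sorted_wrt_append)
    define bs where "bs = map (\<lambda>x. x - 1) cs"
    have cs_eq: "cs = map Suc bs"
      unfolding bs_def map_map using pos by (intro map_idI[symmetric]) auto
    have "gotz_partition bs"
      using assms(1) unfolding gotz_partition_def bs_def
      by (auto simp: sorted_wrt_map elim!: sorted_wrt_mono_rel[rotated])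
    moreover have "partition_step bs cs"
      using cs_eq by (simp add: partition_step_def)
    moreover have "sum_list cs = sum_list bs + length bs"
      unfolding cs_eq by (simp add: sum_list_Suc)
    ultimately show thesis
      using that cs cs_eq by simp
  qed
qed

lemma admissible_gotz_poly: "gotz_partition bs \<Longrightarrow> admissible (gotz_poly bs)"
  by (auto simp: admissible_def)

lemma admissible_one: "admissible 1"
  using admissible_gotz_poly gotz_partition_single_0 gotz_poly_single_0 by metis

lemma child_gotz_poly:
  "gotz_partition bs \<Longrightarrow> partition_step bs cs \<Longrightarrow> child (gotz_poly bs) (gotz_poly cs)"
  by (auto simp: child_def admissible_gotz_poly partition_step_def sigma_op_gotz_poly
      lambda_op_gotz_poly)

lemma childE:
  assumes "child P Q"
  obtains bs cs where "gotz_partition bs" and "gotz_partition cs" and "partition_step bs cs"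
    and "P = gotz_poly bs" and "Q = gotz_poly cs"
proof -
  obtain bs where bs: "gotz_partition bs" "P = gotz_poly bs"
    using assms by (auto simp: child_def admissible_def)
  then have "\<exists>cs. partition_step bs cs \<and> Q = gotz_poly cs"
    using assms by (auto simp: child_def partition_step_def sigma_op_gotz_poly lambda_op_gotz_poly)
  then show thesis
    using that bs gotz_partition_step by blast
qed

lemma admissible_child: "child P Q \<Longrightarrow> admissible Q"
  by (metis childE admissible_gotz_poly)

lemma sigma_op_neq_lambda_op:
  assumes "admissible P"
  shows "sigma_op P \<noteq> lambda_op P"
proof -
  obtain bs where bs: "gotz_partition bs" "P = gotz_poly bs"
    using assms by (auto simp: admissible_def)
  have "gotz_poly (bs @ [0]) \<noteq> gotz_poly (map Suc bs)"
    using bs(1) gotz_partition_step inj_onD[OF inj_on_gotz_poly] snoc_0_neq_map_Suc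
    unfolding partition_step_def by (metis mem_Collect_eq)
  then show ?thesis
    using bs by (simp add: sigma_op_gotz_poly lambda_op_gotz_poly)
qed

lemma not_child_one: "\<not> child P 1"
  by (metis childE gotz_partition_single_0 gotz_poly_single_0 inj_onD[OF inj_on_gotz_poly]
      mem_Collect_eq not_partition_step_single_0)

lemma child_left_unique: "child P Q \<Longrightarrow> child P' Q \<Longrightarrow> P = P'"
  by (metis childE inj_onD[OF inj_on_gotz_poly] mem_Collect_eq partition_step_left_unique)

lemma ex_child_of:
  assumes "admissible Q" and "Q \<noteq> 1"
  shows "\<exists>P. child P Q"
proof -
  obtain cs where cs: "gotz_partition cs" "Q = gotz_poly cs"
    using assms(1) by (auto simp: admissible_def)
  with assms(2) obtain bs where "gotz_partition bs" "partition_step bs cs"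
    using gotz_partition_parent gotz_poly_single_0 by metis
  then show ?thesis
    using cs child_gotz_poly by blast
qed

lemma rtranclp_child_one_gotz_poly: "gotz_partition cs \<Longrightarrow> child\<^sup>*\<^sup>* 1 (gotz_poly cs)"
proof (induction "sum_list cs + length cs" arbitrary: cs rule: less_induct)
  case less
  show ?case
  proof (cases "cs = [0]")
    case True
    then show ?thesis
      by (simp add: gotz_poly_single_0)
  next
    case False
    with less.prems obtain bs where "gotz_partition bs" "partition_step bs cs"
      and "sum_list bs + length bs < sum_list cs + length cs"
      by (rule gotz_partition_parent)
    then show ?thesis
      using less.hyps child_gotz_poly by (blast intro: rtranclp.rtrancl_into_rtrancl)
  qed
qed

lemma rtranclp_child_one: "admissible Q \<Longrightarrow> child\<^sup>*\<^sup>* 1 Q"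
  by (auto simp: admissible_def intro: rtranclp_child_one_gotz_poly)

lemma infinite_admissible: "infinite {P. admissible P}"
proof -
  have "range (\<lambda>n. replicate (Suc n) (0::nat)) \<subseteq> {bs. gotz_partition bs}"
    by (auto simp: gotz_partition_def sorted_wrt_iff_nth_less)
  moreover have "infinite (range (\<lambda>n. replicate (Suc n) (0::nat)))"
    by (rule range_inj_infinite) (auto intro: injI dest: arg_cong[of _ _ length])
  ultimately have "infinite {bs. gotz_partition bs}"
    using finite_subset by blast
  then have "infinite (gotz_poly ` {bs. gotz_partition bs})"
    using finite_imageD inj_on_gotz_poly by blast
  moreover have "gotz_poly ` {bs. gotz_partition bs} = {P. admissible P}"
    by (auto simp: admissible_def)
  ultimately show ?thesis
    by simp
qed

theorem theorem2p10:
  shows "admissible 1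
    \<and> (\<forall>P. admissible P \<longrightarrow>
          admissible (sigma_op P) \<and> admissible (lambda_op P) \<and> sigma_op P \<noteq> lambda_op P)
    \<and> \<not> (\<exists>P. child P 1)
    \<and> (\<forall>Q. admissible Q \<and> Q \<noteq> 1 \<longrightarrow> (\<exists>!P. child P Q))
    \<and> (\<forall>Q. admissible Q \<longrightarrow> child\<^sup>*\<^sup>* 1 Q)
    \<and> infinite {P. admissible P}"
proof (intro conjI allI impI)
  fix P
  assume "admissible P"
  then show "admissible (sigma_op P)" and "admissible (lambda_op P)"
    and "sigma_op P \<noteq> lambda_op P"
    using sigma_op_neq_lambda_op by (auto simp: child_def intro: admissible_child)
next
  fix Q
  assume "admissible Q \<and> Q \<noteq> 1"
  then show "\<exists>!P. child P Q"
    using ex_child_of child_left_unique by blast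
qed (use admissible_one not_child_one rtranclp_child_one infinite_admissible in auto)

end
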